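(* Let $p$ be a prime, $a,b,c\in\mathbb{Z}_p$ with $a\neq 0$, and $P(x,y)=a+bx+cy$. Then $(\mathbb{Z}_p,* )$ with $x*y=P(x,y)$ is a quasigroup with the cross inverse property if and only if $bc\equiv 1\pmod p$.
   Context: $\mathbb{Z}_p$ is the field of integers modulo $p$. A groupoid $(G,\cdot)$ is a quasigroup if for all $u,v\in G$ the equations $u\cdot x=v$ and $y\cdot u=v$ have unique solutions. In a quasigroup, for each $x$ let $e_\rho(x)$ be the unique element with $x\cdot e_\rho(x)=x$, and $x^\rho$ the unique element with $x\cdot x^\rho=e_\rho(x)$. The cross inverse property means $(x\cdot y)\cdot x^\rho=y$ for all $x,y$. *)

theory Defs
  imports "HOL-Number_Theory.Number_Theory"
begin

definition quasigroup :: "'a set \<Rightarrow> ('a \<Rightarrow> 'a \<Rightarrow> 'a) \<Rightarrow> bool" where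
  "quasigroup G m \<longleftrightarrow>
     (\<forall>x\<in>G. \<forall>y\<in>G. m x y \<in> G) \<and>
     (\<forall>u\<in>G. \<forall>v\<in>G. (\<exists>!x. x \<in> G \<and> m u x = v) \<and> (\<exists>!y. y \<in> G \<and> m y u = v))"

definition e_rho :: "'a set \<Rightarrow> ('a \<Rightarrow> 'a \<Rightarrow> 'a) \<Rightarrow> 'a \<Rightarrow> 'a" where
  "e_rho G m x = (THE e. e \<in> G \<and> m x e = x)"

definition rho_inv :: "'a set \<Rightarrow> ('a \<Rightarrow> 'a \<Rightarrow> 'a) \<Rightarrow> 'a \<Rightarrow> 'a" where
  "rho_inv G m x = (THE r. r \<in> G \<and> m x r = e_rho G m x)"

definition cross_inverse_property :: "'a set \<Rightarrow> ('a \<Rightarrow> 'a \<Rightarrow> 'a) \<Rightarrow> bool" where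
  "cross_inverse_property G m \<longleftrightarrow>
     (\<forall>x\<in>G. \<forall>y\<in>G. m (m x y) (rho_inv G m x) = y)"

end

theory Submission
  imports Defs
begin

(* Only-if: the cross inverse property at x = 0, applied to y = 0 and y = 1 with
   the same element r = 0^rho, gives a + a b + c r = 0 and a + a b + b c + c r = 1
   modulo p; subtracting yields b c = 1.

   If: when b c = 1, multiplication by b inverts multiplication by c modulo p,
   so both division equations  u * x = v  and  y * u = v  are linear congruences
   with exactly one solution in {0..<p}.  Hence we have a quasigroup, e_rho and
   rho_inv satisfy their defining equations, and the cross inverse identity
   reduces to a linear combination of those two defining congruences.
   Neither direction uses a <> 0 or the primality of p beyond p > 1. *)

definition affine_op :: "int \<Rightarrow> int \<Rightarrow> int \<Rightarrow> int \<Rightarrow> int \<Rightarrow> int \<Rightarrow> int" where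
  "affine_op p a b c x y = (a + b * x + c * y) mod p"

lemma quasigroup_e_rho:
  assumes "quasigroup G m" and "x \<in> G"
  shows "e_rho G m x \<in> G \<and> m x (e_rho G m x) = x"
  unfolding e_rho_def
  by (rule theI') (use assms in \<open>simp add: quasigroup_def\<close>)

lemma quasigroup_rho_inv:
  assumes "quasigroup G m" and "x \<in> G"
  shows "rho_inv G m x \<in> G \<and> m x (rho_inv G m x) = e_rho G m x"
  unfolding rho_inv_def
  by (rule theI') (use assms quasigroup_e_rho[OF assms] in \<open>simp add: quasigroup_def\<close>)

lemma affine_op_closed: "p > 0 \<Longrightarrow> affine_op p a b c x y \<in> {0..<p}"
  by (simp add: affine_op_def)

lemma affine_op_cong: "[affine_op p a b c x y = a + b * x + c * y] (mod p)"
  by (simp add: affine_op_def)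

lemma affine_op_nested_cong:
  "[affine_op p a b c (affine_op p a b c x y) z = a + b * (a + b * x + c * y) + c * z] (mod p)"
proof -
  have "[a + b * affine_op p a b c x y + c * z = a + b * (a + b * x + c * y) + c * z] (mod p)"
    by (intro cong_add cong_mult cong_refl) (rule affine_op_cong)
  with affine_op_cong show ?thesis
    by (rule cong_trans)
qed

lemma affine_op_eq_iff:
  assumes "v \<in> {0..<p}"
  shows "affine_op p a b c x y = v \<longleftrightarrow> [a + b * x + c * y = v] (mod p)"
  using assms by (simp add: affine_op_def cong_def)

lemma cross_inverse_imp_unit:
  fixes p a b c :: int
  assumes "p > 1" and cip: "cross_inverse_property {0..<p} (affine_op p a b c)"
  shows "[b * c = 1] (mod p)"
proof -
  define r where "r = rho_inv {0..<p} (affine_op p a b c) 0"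
  have cip_at_0: "[a + b * (a + c * y) + c * r = y] (mod p)" if "y \<in> {0..<p}" for y
  proof -
    have "affine_op p a b c (affine_op p a b c 0 y) r = y"
      using cip that by (simp add: cross_inverse_property_def r_def)
    then have "[y = a + b * (a + c * y) + c * r] (mod p)"
      using affine_op_nested_cong[of p a b c 0 y r] by simp
    then show ?thesis
      by (rule cong_sym)
  qed
  have "p dvd a + b * (a + c * 1) + c * r - 1" and "p dvd a + b * (a + c * 0) + c * r - 0"
    using cip_at_0[of 1] cip_at_0[of 0] \<open>p > 1\<close> unfolding cong_iff_dvd_diff by auto
  then have "p dvd (a + b * (a + c * 1) + c * r - 1) - (a + b * (a + c * 0) + c * r - 0)"
    by (rule dvd_diff)
  also have "(a + b * (a + c * 1) + c * r - 1) - (a + b * (a + c * 0) + c * r - 0) = b * c - 1"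
    by (simp add: algebra_simps)
  finally show ?thesis
    by (simp add: cong_iff_dvd_diff)
qed

lemma cong_cancel_unit:
  fixes p b c x w :: int
  assumes "[b * c = 1] (mod p)"
  shows "[c * x = w] (mod p) \<longleftrightarrow> [x = b * w] (mod p)"
proof
  assume "[c * x = w] (mod p)"
  then have "[b * (c * x) = b * w] (mod p)"
    by (rule cong_scalar_left)
  moreover have "[b * (c * x) = x] (mod p)"
    using cong_scalar_right[OF assms, of x] by (simp add: mult.assoc)
  ultimately show "[x = b * w] (mod p)"
    using cong_sym cong_trans by blast
next
  assume "[x = b * w] (mod p)"
  then have "[c * x = c * (b * w)] (mod p)"
    by (rule cong_scalar_left)
  moreover have "[c * (b * w) = w] (mod p)"
    using cong_scalar_right[OF assms, of w] by (simp add: mult.assoc mult.left_commute)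
  ultimately show "[c * x = w] (mod p)"
    by (rule cong_trans)
qed

lemma unique_residue_solution:
  fixes p b c w :: int
  assumes "p > 0" and "[b * c = 1] (mod p)"
  shows "\<exists>!x. x \<in> {0..<p} \<and> [c * x = w] (mod p)"
proof
  show "(b * w) mod p \<in> {0..<p} \<and> [c * ((b * w) mod p) = w] (mod p)"
    using assms by (simp add: cong_cancel_unit)
next
  fix x assume x: "x \<in> {0..<p} \<and> [c * x = w] (mod p)"
  then have "[x = (b * w) mod p] (mod p)"
    using cong_cancel_unit[OF assms(2)] by (simp add: cong_def)
  then show "x = (b * w) mod p"
    by (rule cong_less_imp_eq_int[rotated 4]) (use x \<open>p > 0\<close> in auto)
qed

lemma cong_add_iff_diff: "[(t::int) + s = v] (mod p) \<longleftrightarrow> [s = v - t] (mod p)"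
  unfolding cong_iff_dvd_diff by (simp add: algebra_simps)

lemma affine_quasigroup:
  fixes p a b c :: int
  assumes "p > 0" and unit: "[b * c = 1] (mod p)"
  shows "quasigroup {0..<p} (affine_op p a b c)"
proof -
  have right_div: "\<exists>!x. x \<in> {0..<p} \<and> affine_op p a b c u x = v" if "v \<in> {0..<p}" for u v
  proof -
    have "affine_op p a b c u x = v \<longleftrightarrow> [c * x = v - (a + b * u)] (mod p)" for x
      using affine_op_eq_iff[OF that] cong_add_iff_diff by simp
    then show ?thesis
      using unique_residue_solution[OF assms] by simp
  qed
  have left_div: "\<exists>!y. y \<in> {0..<p} \<and> affine_op p a b c y u = v" if "v \<in> {0..<p}" for u v
  proof -
    have "affine_op p a b c y u = v \<longleftrightarrow> [b * y = v - (a + c * u)] (mod p)" for y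
      using affine_op_eq_iff[OF that] cong_add_iff_diff[of "a + c * u" "b * y" v p]
      by (simp add: ac_simps)
    moreover have "[c * b = 1] (mod p)"
      using unit by (simp add: mult.commute)
    ultimately show ?thesis
      using unique_residue_solution[OF \<open>p > 0\<close>] by simp
  qed
  show ?thesis
    unfolding quasigroup_def
    using affine_op_closed[OF \<open>p > 0\<close>] right_div left_div by simp
qed

(* If direction, second half: with e = e_rho x and r = x^rho we have
   a + b x + c e = x and a + b x + c r = e, and
   (x * y) * r - y = (a + b x + c r - e) + b (a + b x + c e - x) + (b c - 1)(y - e). *)
lemma affine_cross_inverse:
  fixes p a b c :: int
  assumes "p > 0" and unit: "[b * c = 1] (mod p)"
  shows "cross_inverse_property {0..<p} (affine_op p a b c)"
  unfolding cross_inverse_property_def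
proof (intro ballI)
  fix x y assume x: "x \<in> {0..<p}" and y: "y \<in> {0..<p}"
  define e where "e = e_rho {0..<p} (affine_op p a b c) x"
  define r where "r = rho_inv {0..<p} (affine_op p a b c) x"
  have qg: "quasigroup {0..<p} (affine_op p a b c)"
    using affine_quasigroup[OF assms] .
  have "e \<in> {0..<p}" and "affine_op p a b c x e = x"
    using quasigroup_e_rho[OF qg x] by (simp_all add: e_def)
  then have E: "p dvd a + b * x + c * e - x"
    using x by (simp add: affine_op_eq_iff cong_iff_dvd_diff)
  have "affine_op p a b c x r = e"
    using quasigroup_rho_inv[OF qg x] by (simp add: e_def r_def)
  then have R: "p dvd a + b * x + c * r - e"
    using \<open>e \<in> {0..<p}\<close> by (simp add: affine_op_eq_iff cong_iff_dvd_diff)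
  have U: "p dvd (b * c - 1) * (y - e)"
    using unit by (simp add: cong_iff_dvd_diff)
  have "p dvd (a + b * x + c * r - e) + b * (a + b * x + c * e - x) + (b * c - 1) * (y - e)"
    using dvd_add[OF dvd_add[OF R dvd_mult[OF E]] U] .
  also have "\<dots> = (a + b * (a + b * x + c * y) + c * r) - y"
    by (simp add: algebra_simps)
  finally have "[a + b * (a + b * x + c * y) + c * r = y] (mod p)"
    by (simp only: cong_iff_dvd_diff)
  then have "[affine_op p a b c (affine_op p a b c x y) r = y] (mod p)"
    by (rule cong_trans[OF affine_op_nested_cong])
  then have "affine_op p a b c (affine_op p a b c x y) r = y"
    by (rule cong_less_imp_eq_int[rotated 4]) (use y \<open>p > 0\<close> in \<open>auto simp: affine_op_def\<close>)
  then show "affine_op p a b c (affine_op p a b c x y) (rho_inv {0..<p} (affine_op p a b c) x) = y"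
    by (simp add: r_def)
qed

theorem mainTheorem16:
  fixes p a b c :: int
  assumes "prime p"
    and "a \<in> {0..<p}" and "b \<in> {0..<p}" and "c \<in> {0..<p}"
    and "a \<noteq> 0"
  shows "(quasigroup {0..<p} (\<lambda>x y. (a + b * x + c * y) mod p) \<and>
          cross_inverse_property {0..<p} (\<lambda>x y. (a + b * x + c * y) mod p))
         \<longleftrightarrow> [b * c = 1] (mod p)"
proof -
  have "p > 1"
    using \<open>prime p\<close> prime_gt_1_int by blast
  have op: "(\<lambda>x y. (a + b * x + c * y) mod p) = affine_op p a b c"
    by (simp add: fun_eq_iff affine_op_def)
  show ?thesis
    unfolding op
  proof
    assume "quasigroup {0..<p} (affine_op p a b c) \<and>
            cross_inverse_property {0..<p} (affine_op p a b c)"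
    then show "[b * c = 1] (mod p)"
      using cross_inverse_imp_unit[OF \<open>p > 1\<close>] by blast
  next
    assume "[b * c = 1] (mod p)"
    moreover have "p > 0"
      using \<open>p > 1\<close> by simp
    ultimately show "quasigroup {0..<p} (affine_op p a b c) \<and>
                     cross_inverse_property {0..<p} (affine_op p a b c)"
      using affine_quasigroup affine_cross_inverse by blast
  qed
qed

end
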